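(* There is an infinite set $A_0\subset\mathbb{N}_0$ such that $A_0^2+A_0=\mathbb{N}_0$ and $$\liminf_{X\to\infty}\frac{A_0(X)}{(X\log X)^{1/3}}<\infty.$$
   Context: $\mathbb{N}_0$ is the set of nonnegative integers; $A_0^2=\{ab:a,b\in A_0\}$, $A_0^2+A_0=\{x+y:x\in A_0^2,y\in A_0\}$; $A_0(X)=|A_0\cap[1,X]|$. *)

theory Defs
  imports "HOL-Analysis.Analysis"
begin

definition prodset :: "nat set \<Rightarrow> nat set" where
  "prodset A = {a * b | a b. a \<in> A \<and> b \<in> A}"

definition sumset :: "nat set \<Rightarrow> nat set \<Rightarrow> nat set" where
  "sumset B C = {x + y | x y. x \<in> B \<and> y \<in> C}"

definition counting :: "nat set \<Rightarrow> real \<Rightarrow> nat" where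
  "counting A X = card {a \<in> A. 1 \<le> a \<and> real a \<le> X}"

end

theory Submission
  imports Defs
begin

text \<open>
Take \<open>A\<^sub>0\<close> to be \<open>0\<close> together with, for a super-exponentially growing sequence of scales
\<open>\<beta> = 2\<^sup>e\<close>, the interval \<open>(L, 4\<beta>]\<close> and the short blocks \<open>[2\<^sup>i\<beta>, 2\<^sup>i\<beta> + 2\<^sup>i)\<close>, \<open>i \<le> e\<close>,
where \<open>L\<close> is the cube of the previous scale and \<open>(L + 1)\<^sup>2 \<le> \<beta>\<close>.
Every \<open>p < \<beta>\<^sup>3\<close> lies within \<open>2\<beta>\<close> above a product of two elements of this set: small \<open>p\<close> use
products of elements of the interval, and \<open>p \<ge> \<beta>\<^sup>2\<close> use a block element times a factor in
\<open>[\<beta>, 2\<beta>]\<close>. Subtracting such a product from \<open>n \<in> (L, \<beta>\<^sup>3]\<close> leaves a remainder in the interval,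
so \<open>A\<^sub>0\<^sup>2 + A\<^sub>0\<close> contains every \<open>n\<close>. Up to \<open>X = \<beta>\<^sup>3\<close> the set has at most \<open>L + 6\<beta> \<le> 7\<beta>\<close>
elements, while \<open>(X log X)\<^sup>1\<^sup>/\<^sup>3 \<ge> \<beta>\<close>; hence the liminf is at most \<open>7\<close>.
\<close>

lemma exists_product_near_below:
  fixes w v \<beta> p :: nat
  assumes "w \<le> v * \<beta>" "w * \<beta> \<le> p" "p < (w + v) * (2 * \<beta>)" "\<beta> > 0"
  shows "\<exists>a b. w \<le> a \<and> a < w + v \<and> \<beta> \<le> b \<and> b \<le> 2 * \<beta> \<and> a * b \<le> p \<and> p < a * b + 2 * \<beta>"
proof (cases "w = 0")
  case True
  have "p div (2 * \<beta>) < v" using assms True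
    by (simp add: div_less_iff_less_mult mult.commute)
  moreover have "p < p div (2 * \<beta>) * (2 * \<beta>) + 2 * \<beta>"
    using assms(4) by (metis div_mult_mod_eq add_less_cancel_left mod_less_divisor
        nat_0_less_mult_iff zero_less_numeral)
  ultimately show ?thesis using True assms(4)
    by (intro exI[of _ "p div (2 * \<beta>)"] exI[of _ "2 * \<beta>"]) auto
next
  case False
  define b where "b = min (2 * \<beta>) (p div w)"
  have b_ge: "\<beta> \<le> b" unfolding b_def using assms False
    by (simp add: less_eq_div_iff_mult_less_eq mult.commute)
  have b_le: "b \<le> 2 * \<beta>" unfolding b_def by simp
  have wb: "w * b \<le> p" unfolding b_def using False
    by (metis min.cobounded2 mult.commute order.trans div_times_less_eq_dividend mult_le_mono2)
  have p_less: "p < (w + v) * b"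
  proof (cases "2 * \<beta> \<le> p div w")
    case True
    then show ?thesis using assms unfolding b_def by simp
  next
    case small: False
    have "p < w * (p div w) + w" using False
      by (metis div_mult_mod_eq add_less_cancel_left mod_less_divisor mult.commute not_gr_zero)
    moreover have "w \<le> v * b" using assms(1) b_ge by (meson le_trans mult_le_mono2)
    ultimately show ?thesis using small unfolding b_def by (simp add: algebra_simps)
  qed
  have b_pos: "b > 0" using b_ge assms(4) by simp
  define a where "a = p div b"
  have "w \<le> a" unfolding a_def using wb b_pos by (simp add: less_eq_div_iff_mult_less_eq)
  moreover have "a < w + v" unfolding a_def using p_less b_pos by (simp add: div_less_iff_less_mult)
  moreover have "p < a * b + b" unfolding a_def using b_pos
    by (metis div_mult_mod_eq add_less_cancel_left mod_less_divisor)
  ultimately show ?thesis using b_ge b_le by (intro exI[of _ a] exI[of _ b]) (auto simp: a_def)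
qed

definition scale_set :: "nat \<Rightarrow> nat \<Rightarrow> nat \<Rightarrow> nat set" where
  "scale_set L \<beta> e = {L<..4 * \<beta>} \<union> (\<Union>i\<le>e. {2^i * \<beta>..<2^i * (\<beta> + 1)})"

lemma finite_scale_set: "finite (scale_set L \<beta> e)"
  by (simp add: scale_set_def)

lemma card_scale_set_le: "card (scale_set L \<beta> e) \<le> 4 * \<beta> + 2 ^ (e + 1)"
proof -
  have "card (\<Union>i\<le>e. {2^i * \<beta>..<2^i * (\<beta> + 1)}) \<le> (\<Sum>i\<le>e. card {2^i * \<beta>..<2^i * (\<beta> + 1)})"
    by (rule card_UN_le) simp
  also have "\<dots> = (\<Sum>i<e + 1. 2 ^ i)" by (simp add: algebra_simps lessThan_Suc_atMost)
  also have "\<dots> \<le> 2 ^ (e + 1)" by (simp add: atLeast0LessThan[symmetric] sum_power2)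
  finally show ?thesis
    unfolding scale_set_def by (intro order.trans[OF card_Un_le]) simp
qed

lemma scale_set_bounds:
  assumes "x \<in> scale_set L \<beta> e" "L < \<beta>" "2 ^ e \<le> \<beta>" "2 \<le> \<beta>"
  shows "L < x \<and> x \<le> \<beta> ^ 3"
proof -
  have cube: "4 * \<beta> \<le> \<beta> ^ 3"
    using assms(4) by (metis power3_eq_cube mult_le_mono1 numeral_Bit0_eq_double mult_le_mono)
  have cube': "\<beta> * (\<beta> + 1) \<le> \<beta> ^ 3"
    using assms(4) mult_le_mono2[of 2 \<beta> \<beta>] mult_le_mono2[of "\<beta> + 1" "\<beta> * \<beta>" \<beta>]
    by (simp add: power3_eq_cube; linarith)
  from assms(1) consider "L < x" "x \<le> 4 * \<beta>"
    | i where "i \<le> e" "2^i * \<beta> \<le> x" "x < 2^i * (\<beta> + 1)"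
    unfolding scale_set_def by auto
  then show "L < x \<and> x \<le> \<beta> ^ 3"
  proof cases
    case 1
    then show ?thesis using cube by auto
  next
    case 2
    have "\<beta> \<le> 2^i * \<beta>" by simp
    moreover have "2^i * (\<beta> + 1) \<le> 2^e * (\<beta> + 1)"
      using 2 by (intro mult_le_mono1 power_increasing) auto
    moreover have "2^e * (\<beta> + 1) \<le> \<beta> * (\<beta> + 1)" using assms(3) by (rule mult_le_mono1)
    ultimately show ?thesis using 2 assms(2) cube' by linarith
  qed
qed

locale scale_cover =
  fixes A :: "nat set" and L \<beta> e :: nat
  assumes zero_mem: "0 \<in> A"
    and scale_set_subset: "scale_set L \<beta> e \<subseteq> A"
    and threshold_sq_le: "(L + 1)^2 \<le> \<beta>"
    and scale_le: "\<beta> \<le> 2 ^ e"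
begin

lemma threshold_less: "L < \<beta>"
proof -
  have "L + 1 \<le> (L + 1)^2" by (simp add: power2_eq_square)
  then show ?thesis using threshold_sq_le by linarith
qed

lemma interval_mem: "L < x \<Longrightarrow> x \<le> 4 * \<beta> \<Longrightarrow> x \<in> A"
  using scale_set_subset by (auto simp: scale_set_def)

lemma block_mem:
  assumes "i \<le> e" "2^i * \<beta> \<le> x" "x < 2^i * (\<beta> + 1)"
  shows "x \<in> A"
proof -
  have "x \<in> scale_set L \<beta> e" using assms unfolding scale_set_def by auto
  then show ?thesis using scale_set_subset by blast
qed

lemma product_near_below_in_block:
  assumes "i \<le> e" "2^i * \<beta>^2 \<le> p" "p < 2^(i + 1) * \<beta> * (\<beta> + 1)"
  shows "\<exists>a\<in>A. \<exists>b\<in>A. a * b \<le> p \<and> p < a * b + 2 * \<beta>"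
proof -
  obtain a b where ab: "2^i * \<beta> \<le> a" "a < 2^i * \<beta> + 2^i" "\<beta> \<le> b" "b \<le> 2 * \<beta>"
    "a * b \<le> p" "p < a * b + 2 * \<beta>"
    using exists_product_near_below[of "2^i * \<beta>" "2^i" \<beta> p] assms threshold_less
    by (auto simp: power2_eq_square algebra_simps)
  have "a \<in> A" using block_mem[OF assms(1) ab(1)] ab(2) by (simp add: algebra_simps)
  moreover have "b \<in> A" using interval_mem ab(3,4) threshold_less by simp
  ultimately show ?thesis using ab by blast
qed

lemma product_near_below_large:
  "i \<le> e \<Longrightarrow> \<beta>^2 \<le> p \<Longrightarrow> p < 2^(i + 1) * \<beta> * (\<beta> + 1) \<Longrightarrow>
    \<exists>a\<in>A. \<exists>b\<in>A. a * b \<le> p \<and> p < a * b + 2 * \<beta>"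
proof (induction i arbitrary: p)
  case 0
  then show ?case using product_near_below_in_block[of 0 p] by simp
next
  case (Suc i)
  show ?case
  proof (cases "p < 2^(i + 1) * \<beta> * (\<beta> + 1)")
    case True
    then show ?thesis using Suc by simp
  next
    case False
    have "2^(Suc i) * \<beta>^2 \<le> 2^(i + 1) * \<beta> * (\<beta> + 1)" by (simp add: power2_eq_square algebra_simps)
    then show ?thesis using False Suc.prems product_near_below_in_block[of "Suc i" p] by simp
  qed
qed

lemma product_near_below:
  assumes "p < \<beta>^3"
  shows "\<exists>a\<in>A. \<exists>b\<in>A. a * b \<le> p \<and> p < a * b + 2 * \<beta>"
proof -
  have L_sq: "(L + 1) * (L + 1) \<le> \<beta>" using threshold_sq_le by (simp add: power2_eq_square)
  consider "p < 2 * \<beta>" | "2 * \<beta> \<le> p" "p < (L + 1) * (2 * \<beta>)"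
    | "(L + 1) * (2 * \<beta>) \<le> p" "p < \<beta>^2" | "\<beta>^2 \<le> p"
    by linarith
  then show ?thesis
  proof cases
    case 1
    then show ?thesis using zero_mem by force
  next
    case 2
    define b where "b = p div (L + 1)"
    have "L + 1 \<le> b" unfolding b_def using 2 L_sq by (simp add: less_eq_div_iff_mult_less_eq)
    moreover have "b < 2 * \<beta>" unfolding b_def using 2 by (simp add: div_less_iff_less_mult mult.commute)
    moreover have "p < (L + 1) * b + (L + 1)" unfolding b_def
      by (metis div_mult_mod_eq add_less_cancel_left mod_less_divisor zero_less_Suc add.commute
          plus_1_eq_Suc mult.commute)
    moreover have "(L + 1) * b \<le> p" unfolding b_def by (rule times_div_less_eq_dividend)
    ultimately show ?thesis using interval_mem threshold_less
      by (intro bexI[of _ "L + 1"] bexI[of _ b]) auto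
  next
    case 3
    define a where "a = p div (2 * \<beta>)"
    have "L + 1 \<le> a" unfolding a_def using 3 threshold_less by (simp add: less_eq_div_iff_mult_less_eq)
    moreover have "a < \<beta>" unfolding a_def using 3 threshold_less
      by (simp add: div_less_iff_less_mult power2_eq_square)
    moreover have "p < a * (2 * \<beta>) + 2 * \<beta>" unfolding a_def using threshold_less
      by (metis div_mult_mod_eq add_less_cancel_left mod_less_divisor nat_0_less_mult_iff
          zero_less_numeral gr_zeroI less_nat_zero_code)
    moreover have "a * (2 * \<beta>) \<le> p" unfolding a_def by simp
    ultimately show ?thesis using interval_mem threshold_less
      by (intro bexI[of _ a] bexI[of _ "2 * \<beta>"]) auto
  next
    case 4
    have "\<beta>^3 \<le> \<beta> * \<beta> * 2^e"
      using mult_le_mono2[OF scale_le, of "\<beta> * \<beta>"] by (simp add: power3_eq_cube)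
    also have "\<dots> \<le> 2^(e + 1) * \<beta> * (\<beta> + 1)" by (simp add: algebra_simps)
    finally show ?thesis using product_near_below_large[of e p] 4 assms by simp
  qed
qed

lemma sum_product_cover:
  assumes "L < n" "n \<le> \<beta>^3"
  shows "\<exists>a\<in>A. \<exists>b\<in>A. \<exists>c\<in>A. n = a * b + c"
proof -
  obtain a b where ab: "a \<in> A" "b \<in> A" "a * b \<le> n - L - 1" "n - L - 1 < a * b + 2 * \<beta>"
    using product_near_below[of "n - L - 1"] assms threshold_less by force
  have "n - a * b \<in> A" using ab assms threshold_less by (intro interval_mem) auto
  then show ?thesis using ab assms by (intro bexI[of _ a] bexI[of _ b] bexI[of _ "n - a * b"]) auto
qed

end

definition level_scale :: "nat \<Rightarrow> nat" where
  "level_scale k = 2 ^ 7 ^ k"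

definition level_threshold :: "nat \<Rightarrow> nat" where
  "level_threshold k = (case k of 0 \<Rightarrow> 0 | Suc j \<Rightarrow> level_scale j ^ 3)"

definition level :: "nat \<Rightarrow> nat set" where
  "level k = scale_set (level_threshold k) (level_scale k) (7 ^ k)"

definition A0 :: "nat set" where
  "A0 = insert 0 (\<Union>k. level k)"

lemma level_threshold_Suc [simp]: "level_threshold (Suc k) = level_scale k ^ 3"
  by (simp add: level_threshold_def)

lemma two_le_level_scale: "2 \<le> level_scale k"
proof -
  have "(2::nat) ^ 1 \<le> 2 ^ 7 ^ k" by (intro power_increasing) auto
  then show ?thesis unfolding level_scale_def by simp
qed

lemma less_level_scale: "k < level_scale k"
proof -
  have "k < 2 ^ k" by (rule less_exp)
  also have "(2::nat) ^ k \<le> 2 ^ 7 ^ k"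
    by (intro power_increasing) (auto intro: order.trans[OF less_imp_le[OF less_exp]] simp: power_increasing)
  finally show ?thesis unfolding level_scale_def .
qed

text \<open>The base \<open>7\<close> of the exponent is what makes room here: \<open>6 \<cdot> 7\<^sup>j + 1 \<le> 7\<^sup>j\<^sup>+\<^sup>1\<close>.\<close>
lemma level_threshold_sq_le: "(level_threshold k + 1)^2 \<le> level_scale k"
proof (cases k)
  case 0
  then show ?thesis using two_le_level_scale[of 0] by (simp add: level_threshold_def)
next
  case (Suc j)
  define x :: nat where "x = 2 ^ (3 * 7 ^ j)"
  have "(2::nat) ^ 3 \<le> 2 ^ (3 * 7 ^ j)" by (intro power_increasing) auto
  then have x8: "8 \<le> x" unfolding x_def by simp
  then have "3 * x \<le> x * x" by (intro mult_le_mono1) simp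
  with x8 have "2 * x + 1 \<le> x * x" by linarith
  then have "(x + 1)^2 \<le> 2 * x^2" by (simp add: power2_eq_square algebra_simps)
  also have "2 * x^2 = 2 ^ (6 * 7 ^ j + 1)" unfolding x_def by (simp add: power_mult[symmetric] power_add)
  also have "\<dots> \<le> 2 ^ 7 ^ k" using Suc by (intro power_increasing) auto
  finally show ?thesis using Suc
    by (simp add: level_scale_def x_def power_mult[symmetric] mult.commute)
qed

lemma level_threshold_less: "level_threshold k < level_scale k"
proof -
  have "level_threshold k + 1 \<le> (level_threshold k + 1)^2" by (simp add: power2_eq_square)
  then show ?thesis using level_threshold_sq_le[of k] by linarith
qed

lemma level_bounds: "x \<in> level k \<Longrightarrow> level_threshold k < x \<and> x \<le> level_threshold (Suc k)"
  using scale_set_bounds[of x "level_threshold k" "level_scale k" "7 ^ k"] level_threshold_less two_le_level_scale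
  by (simp add: level_def level_scale_def)

lemma level_scale_le_threshold_Suc: "level_scale k \<le> level_threshold (Suc k)"
  using two_le_level_scale[of k] by (simp add: power3_eq_cube)

lemma mono_level_threshold: "mono level_threshold"
  using level_threshold_less level_scale_le_threshold_Suc by (intro incseq_SucI) (meson less_imp_le order.trans)

lemma scale_cover_level: "scale_cover A0 (level_threshold k) (level_scale k) (7 ^ k)"
proof
  show "0 \<in> A0" by (simp add: A0_def)
  show "scale_set (level_threshold k) (level_scale k) (7 ^ k) \<subseteq> A0" by (auto simp: A0_def level_def)
  show "(level_threshold k + 1)^2 \<le> level_scale k" by (rule level_threshold_sq_le)
  show "level_scale k \<le> 2 ^ 7 ^ k" by (simp add: level_scale_def)
qed

lemma A0_cover_upto: "n \<le> level_threshold (Suc k) \<Longrightarrow> \<exists>a\<in>A0. \<exists>b\<in>A0. \<exists>c\<in>A0. n = a * b + c"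
proof (induction k)
  case 0
  show ?case
  proof (cases "n = 0")
    case True
    then show ?thesis by (intro bexI[of _ 0]) (auto simp: A0_def)
  next
    case False
    then show ?thesis using scale_cover.sum_product_cover[OF scale_cover_level[of 0]] 0
      by (simp add: level_threshold_def)
  qed
next
  case (Suc k)
  then show ?case
    using scale_cover.sum_product_cover[OF scale_cover_level[of "Suc k"]] by (cases "n \<le> level_threshold (Suc k)") auto
qed

lemma sumset_prodset_A0: "sumset (prodset A0) A0 = UNIV"
proof -
  have "n \<in> sumset (prodset A0) A0" for n
  proof -
    have "n \<le> level_threshold (Suc n)" using less_level_scale[of n] level_scale_le_threshold_Suc[of n] by linarith
    then obtain a b c where "a \<in> A0" "b \<in> A0" "c \<in> A0" "n = a * b + c" using A0_cover_upto by blast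
    then show ?thesis unfolding sumset_def prodset_def by blast
  qed
  then show ?thesis by blast
qed

lemma infinite_A0: "infinite A0"
  unfolding infinite_nat_iff_unbounded
proof
  fix m
  have "level_scale m \<in> level m"
    using level_threshold_less[of m] by (simp add: level_def scale_set_def)
  then show "\<exists>n>m. n \<in> A0" using less_level_scale[of m] unfolding A0_def by blast
qed

lemma card_A0_le: "card {a \<in> A0. 1 \<le> a \<and> a \<le> level_scale k ^ 3} \<le> 7 * level_scale k"
proof -
  have "{a \<in> A0. 1 \<le> a \<and> a \<le> level_scale k ^ 3} \<subseteq> {1..level_threshold k} \<union> level k"
  proof
    fix a assume a: "a \<in> {a \<in> A0. 1 \<le> a \<and> a \<le> level_scale k ^ 3}"
    then obtain j where j: "a \<in> level j" unfolding A0_def by auto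
    consider "j < k" | "j = k" | "k < j" by linarith
    then show "a \<in> {1..level_threshold k} \<union> level k"
    proof cases
      case 1
      then have "level_threshold (Suc j) \<le> level_threshold k" by (intro monoD[OF mono_level_threshold]) simp
      then show ?thesis using a level_bounds[OF j] by auto
    next
      case 3
      then have "level_threshold (Suc k) \<le> level_threshold j" by (intro monoD[OF mono_level_threshold]) simp
      then show ?thesis using a level_bounds[OF j] by auto
    qed (use j in simp)
  qed
  then have "card {a \<in> A0. 1 \<le> a \<and> a \<le> level_scale k ^ 3} \<le> card ({1..level_threshold k} \<union> level k)"
    by (intro card_mono) (auto simp: level_def finite_scale_set)
  also have "\<dots> \<le> level_threshold k + card (level k)"
    using card_Un_le[of "{1..level_threshold k}" "level k"] by simp
  also have "\<dots> \<le> level_scale k + (4 * level_scale k + 2 ^ (7 ^ k + 1))"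
    using level_threshold_less[of k] card_scale_set_le unfolding level_def
    by (intro add_mono) auto
  also have "\<dots> = 7 * level_scale k" by (simp add: level_scale_def)
  finally show ?thesis .
qed

lemma counting_ratio_at_cube_le:
  fixes b c N :: real
  assumes "2 \<le> b" "0 \<le> N" "N \<le> c * b"
  shows "N / (b^3 * ln (b^3)) powr (1/3) \<le> c"
proof -
  have "(2::real)^3 \<le> b^3" using assms(1) by (intro power_mono) auto
  then have "1 \<le> ln (b^3)" using assms(1) exp_le by (subst ln_ge_iff) auto
  then have "b^3 \<le> b^3 * ln (b^3)" using assms(1) by (simp add: mult_le_cancel_left1)
  then have "(b^3) powr (1/3) \<le> (b^3 * ln (b^3)) powr (1/3)" using assms(1) by (intro powr_mono2) auto
  moreover have "(b^3) powr (1/3) = b"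
  proof -
    have "b^3 = b powr 3" using assms(1) powr_realpow[of b 3] by simp
    then have "(b^3) powr (1/3) = b powr (3 * (1/3))" by (simp only: powr_powr)
    then show ?thesis using assms(1) by simp
  qed
  ultimately have "b \<le> (b^3 * ln (b^3)) powr (1/3)" by simp
  then have "N / (b^3 * ln (b^3)) powr (1/3) \<le> N / b"
    using assms by (intro divide_left_mono mult_pos_pos) auto
  also have "\<dots> \<le> c" using assms by (simp add: divide_le_eq)
  finally show ?thesis .
qed

lemma Liminf_at_top_le_along:
  fixes f :: "real \<Rightarrow> 'a::complete_lattice" and s :: "nat \<Rightarrow> real"
  assumes "filterlim s at_top sequentially" "\<And>k. f (s k) \<le> c"
  shows "Liminf at_top f \<le> c"
proof (rule Liminf_least)
  fix P :: "real \<Rightarrow> bool" assume "eventually P at_top"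
  then have "eventually (\<lambda>k. P (s k)) sequentially" using assms(1) by (rule eventually_compose_filterlim)
  then obtain k where "P (s k)" by (auto simp: eventually_sequentially)
  then show "(INF x\<in>Collect P. f x) \<le> c" using assms(2) by (intro INF_lower2) auto
qed

theorem corollary3p3:
  shows "\<exists>A :: nat set. infinite A \<and> sumset (prodset A) A = UNIV \<and>
     Liminf at_top (\<lambda>X::real. ereal (real (counting A X) / (X * ln X) powr (1/3))) < \<infinity>"
proof (intro exI[of _ A0] conjI infinite_A0 sumset_prodset_A0)
  let ?X = "\<lambda>k. real (level_scale k) ^ 3"
  have "filterlim ?X at_top sequentially"
  proof (rule filterlim_at_top_mono[OF filterlim_real_sequentially], rule always_eventually, rule allI)
    fix k
    have "k \<le> level_scale k ^ 3"
      using less_level_scale[of k] level_scale_le_threshold_Suc[of k] by simp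
    then show "real k \<le> ?X k" by (metis of_nat_le_iff of_nat_power)
  qed
  moreover have "real (counting A0 (?X k)) / (?X k * ln (?X k)) powr (1/3) \<le> 7" for k
  proof (rule counting_ratio_at_cube_le)
    have "counting A0 (?X k) = card {a \<in> A0. 1 \<le> a \<and> a \<le> level_scale k ^ 3}"
      unfolding counting_def by (metis of_nat_le_iff of_nat_power)
    then show "real (counting A0 (?X k)) \<le> 7 * real (level_scale k)"
      using card_A0_le[of k] by simp
    show "2 \<le> real (level_scale k)" using two_le_level_scale[of k] by simp
  qed simp
  ultimately have "Liminf at_top (\<lambda>X::real. ereal (real (counting A0 X) / (X * ln X) powr (1/3))) \<le> 7"
    by (intro Liminf_at_top_le_along[of ?X]) simp_all
  then show "Liminf at_top (\<lambda>X::real. ereal (real (counting A0 X) / (X * ln X) powr (1/3))) < \<infinity>"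
    by (rule le_less_trans) simp
qed

end
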